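(* Weak-head reduction $\to_{wh}$ on $\mathtt T_J$ is deterministic: if $t\to_{wh} t_1$ and $t\to_{wh} t_2$ then $t_1=t_2$.
   Context: Terms $\mathtt T_J$: $t,u,r ::= x \mid \lambda x.t \mid t(u,y.r)$ ($y$ bound in $r$), up to $\alpha$-equivalence; $\{u/x\}t$ is capture-avoiding substitution. Neutral terms $\mathtt n ::= x \mid \mathtt n(u,y.\mathtt n)$; neutral list contexts $\mathtt D_n ::= \Diamond \mid \mathtt n(u,y.\mathtt D_n)$; weak-head contexts $\mathtt W ::= \Diamond \mid \mathtt W(u,y.r) \mid \mathtt n(u,y.\mathtt W)$ (here $u,r$ arbitrary terms). Weak-head reduction: $\mathtt W\langle \mathtt D_n\langle\lambda x.s\rangle(u,y.r)\rangle \to_{wh} \mathtt W\langle \{\{u/x\}\mathtt D_n\langle s\rangle/y\}r\rangle$ (by $\alpha$-conversion, variables bound by $\mathtt D_n$ not free in $u$, and $x$ not occurring in $\mathtt D_n$). *)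

theory Defs
  imports Main
begin

text \<open>Terms of the lambda-calculus with generalized application, in de Bruijn
  representation (so alpha-equivalent terms are identical).
  JApp t u r represents t(u,y.r), where y is the bound index 0 in r.\<close>

datatype trm = Var nat | Lam trm | JApp trm trm trm

fun lift :: "nat \<Rightarrow> trm \<Rightarrow> trm" where
  "lift k (Var i) = (if i < k then Var i else Var (Suc i))"
| "lift k (Lam t) = Lam (lift (Suc k) t)"
| "lift k (JApp t u r) = JApp (lift k t) (lift k u) (lift (Suc k) r)"

text \<open>subst t k u: capture-avoiding substitution of u for the index k in t
  (indices above k are decremented, since the binder of k is removed).\<close>
fun subst :: "trm \<Rightarrow> nat \<Rightarrow> trm \<Rightarrow> trm" where
  "subst (Var i) k u = (if i < k then Var i else if i = k then u else Var (i - 1))"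
| "subst (Lam t) k u = Lam (subst t (Suc k) (lift 0 u))"
| "subst (JApp t v r) k u = JApp (subst t k u) (subst v k u) (subst r (Suc k) (lift 0 u))"

inductive neutral :: "trm \<Rightarrow> bool" where
  "neutral (Var x)"
| "neutral n \<Longrightarrow> neutral m \<Longrightarrow> neutral (JApp n u m)"

datatype dctx = DHole | DApp trm trm dctx

fun fill_d :: "dctx \<Rightarrow> trm \<Rightarrow> trm" where
  "fill_d DHole t = t"
| "fill_d (DApp n u D) t = JApp n u (fill_d D t)"

fun depth_d :: "dctx \<Rightarrow> nat" where
  "depth_d DHole = 0"
| "depth_d (DApp n u D) = Suc (depth_d D)"

inductive ndctx :: "dctx \<Rightarrow> bool" where
  "ndctx DHole"
| "neutral n \<Longrightarrow> ndctx D \<Longrightarrow> ndctx (DApp n u D)"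

datatype wctx = WHole | WL wctx trm trm | WR trm trm wctx

fun fill_w :: "wctx \<Rightarrow> trm \<Rightarrow> trm" where
  "fill_w WHole t = t"
| "fill_w (WL W u r) t = JApp (fill_w W t) u r"
| "fill_w (WR n u W) t = JApp n u (fill_w W t)"

inductive whctx :: "wctx \<Rightarrow> bool" where
  "whctx WHole"
| "whctx W \<Longrightarrow> whctx (WL W u r)"
| "neutral n \<Longrightarrow> whctx W \<Longrightarrow> whctx (WR n u W)"

text \<open>Weak-head reduction:
  W<D_n<\<lambda>x.s>(u,y.r)> \<rightarrow> W<{{u/x}D_n<s>/y}r>.
  Under the depth(D) binders of D the term u is lifted by depth(D).\<close>
definition wh :: "trm \<Rightarrow> trm \<Rightarrow> bool" where
  "wh t t' \<longleftrightarrow> (\<exists>W D s u r. whctx W \<and> ndctx D \<and>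
     t = fill_w W (JApp (fill_d D (Lam s)) u r) \<and>
     t' = fill_w W (subst r 0 (fill_d D (subst s 0 ((lift 0 ^^ depth_d D) u)))))"

end

theory Submission
  imports Defs
begin

text \<open>A term has at most one decomposition as W<D<\<lambda>x.s>(u,y.r)>, and the reduct is determined
  by the decomposition. Uniqueness rests on three shapes being mutually exclusive: neutral terms
  end in a variable along their right spine, terms D<\<lambda>x.s> end in an abstraction there, and
  neither contains a weak-head redex. Comparing two decompositions constructor by constructor,
  every mixed case pits two of these shapes against each other.\<close>

abbreviation wh_redex :: "dctx \<Rightarrow> trm \<Rightarrow> trm \<Rightarrow> trm \<Rightarrow> trm" where
  "wh_redex D s u r \<equiv> JApp (fill_d D (Lam s)) u r"

inductive_cases neutral_JAppE: "neutral (JApp n u m)"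

lemma fill_d_Lam_inject:
  "fill_d D1 (Lam s1) = fill_d D2 (Lam s2) \<longleftrightarrow> D1 = D2 \<and> s1 = s2"
proof (induction D1 arbitrary: D2)
  case DHole
  then show ?case by (cases D2) auto
next
  case DApp
  then show ?case by (cases D2) auto
qed

lemma neutral_neq_fill_d_Lam: "neutral n \<Longrightarrow> n \<noteq> fill_d D (Lam s)"
proof (induction arbitrary: D rule: neutral.induct)
  case (1 x)
  then show ?case by (cases D) auto
next
  case (2 n m u)
  then show ?case by (cases D) auto
qed

lemma not_neutral_fill_w_redex: "\<not> neutral (fill_w W (wh_redex D s u r))"
  by (induction W) (auto elim: neutral_JAppE dest: neutral_neq_fill_d_Lam)

lemma fill_d_Lam_neq_fill_w_redex:
  assumes "ndctx D"
  shows "fill_d D (Lam s) \<noteq> fill_w W (wh_redex D' s' u r)"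
  using assms
proof (induction arbitrary: W rule: ndctx.induct)
  case 1
  then show ?case by (cases W) auto
next
  case (2 n D v)
  then show ?case
    using neutral_neq_fill_d_Lam not_neutral_fill_w_redex by (cases W) auto
qed

lemma fill_w_redex_unique:
  assumes "whctx W1" "whctx W2" "ndctx D1" "ndctx D2"
    and "fill_w W1 (wh_redex D1 s1 u1 r1) = fill_w W2 (wh_redex D2 s2 u2 r2)"
  shows "W1 = W2 \<and> D1 = D2 \<and> s1 = s2 \<and> u1 = u2 \<and> r1 = r2"
  using assms
proof (induction arbitrary: W2 rule: whctx.induct)
  case 1
  from \<open>whctx W2\<close> show ?case
  proof cases
    case 1
    with "1.prems" show ?thesis by (simp add: fill_d_Lam_inject)
  next
    case (2 W)
    with "1.prems" show ?thesis using fill_d_Lam_neq_fill_w_redex by auto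
  next
    case (3 n W)
    with "1.prems" show ?thesis using neutral_neq_fill_d_Lam by auto
  qed
next
  case (2 W1 u r)
  from \<open>whctx W2\<close> show ?case
  proof cases
    case 1
    with "2.prems" show ?thesis using fill_d_Lam_neq_fill_w_redex[OF \<open>ndctx D2\<close>] by (auto dest: sym)
  next
    case (2 W)
    with "2.prems" "2.IH" show ?thesis by auto
  next
    case (3 n W)
    with "2.prems" show ?thesis using not_neutral_fill_w_redex by auto
  qed
next
  case (3 n W1 u)
  from \<open>whctx W2\<close> show ?case
  proof cases
    case 1
    with "3.prems" \<open>neutral n\<close> show ?thesis using neutral_neq_fill_d_Lam by auto
  next
    case (2 W)
    with "3.prems" \<open>neutral n\<close> show ?thesis using not_neutral_fill_w_redex by force
  next
    case (3 n' W)
    with "3.prems" "3.IH" show ?thesis by auto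
  qed
qed

theorem mainTheorem4:
  assumes "wh t t1" and "wh t t2"
  shows "t1 = t2"
proof -
  from assms(1) obtain W1 D1 s1 u1 r1 where
    "whctx W1" "ndctx D1" "t = fill_w W1 (wh_redex D1 s1 u1 r1)"
    and t1: "t1 = fill_w W1 (subst r1 0 (fill_d D1 (subst s1 0 ((lift 0 ^^ depth_d D1) u1))))"
    unfolding wh_def by blast
  moreover from assms(2) obtain W2 D2 s2 u2 r2 where
    "whctx W2" "ndctx D2" "t = fill_w W2 (wh_redex D2 s2 u2 r2)"
    and t2: "t2 = fill_w W2 (subst r2 0 (fill_d D2 (subst s2 0 ((lift 0 ^^ depth_d D2) u2))))"
    unfolding wh_def by blast
  ultimately have "W1 = W2 \<and> D1 = D2 \<and> s1 = s2 \<and> u1 = u2 \<and> r1 = r2"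
    using fill_w_redex_unique by metis
  then show ?thesis
    unfolding t1 t2 by simp
qed

end
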